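(* Let $S$ be a finite set, $T\ge1$, and let $p$ be the law of a Markov chain $(Y_1,\dots,Y_T)$ of order $m$ on $S^T$, where $1\le m\le T$. For integers $1\le a\le b\le T$ write $p(s_a^b):=\mathbf P(Y_a^b=s_a^b)$, and for every positive integer $k$ define $$\bar R_k(s^T):=-\frac1T\ln\prod_{j=1-k}^{T-1}p\big(s_{(j+1)\vee1}^{(j+k)\wedge T}\big),\qquad \bar R_\infty(s^T):=-\frac1T\ln p(s^T).$$ Then for every $s^T\in S^T$ and every integer $k\ge m$, $$\bar R_k(s^T)=\bar R_m(s^T)+(k-m)\bar R_\infty(s^T).$$
   Context: $s_a^b=(s_a,\dots,s_b)$; $\vee=\max$, $\wedge=\min$; $\ln0=-\infty$. A Markov chain of order $m$ is one in which the conditional law of $Y_t$ given $Y_1^{t-1}$ depends only on $Y_{t-m}^{t-1}$ (for $t>m$). *)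

theory Defs
  imports "HOL-Probability.Probability"
begin

text \<open>Sequences s^T in S^T are represented as functions nat => 's, of which only
the coordinates 1..T are relevant. The law p of (Y_1,...,Y_T) is a pmf on such functions.\<close>

definition win :: "(nat \<Rightarrow> 's) pmf \<Rightarrow> nat \<Rightarrow> nat \<Rightarrow> (nat \<Rightarrow> 's) \<Rightarrow> real" where
  "win p a b s = measure_pmf.prob p {y. \<forall>i\<in>{a..b}. y i = s i}"

text \<open>Markov chain of order m on S^T: for m < t <= T the conditional law of Y_t given
Y_1^{t-1} depends only on Y_{t-m}^{t-1} (conditional probabilities as ratios, on histories
of positive probability).\<close>
definition markov_order :: "(nat \<Rightarrow> 's) pmf \<Rightarrow> nat \<Rightarrow> nat \<Rightarrow> bool" where
  "markov_order p T m \<longleftrightarrow>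
     (\<forall>t\<in>{m<..T}. \<forall>x z. win p 1 (t - 1) x > 0 \<and> win p 1 (t - 1) z > 0 \<and>
        (\<forall>i\<in>{t - m..t - 1}. x i = z i) \<longrightarrow>
        (\<forall>v. win p 1 t (x(t := v)) / win p 1 (t - 1) x = win p 1 t (z(t := v)) / win p 1 (t - 1) z))"

definition eln :: "real \<Rightarrow> ereal" where
  "eln x = (if x > 0 then ereal (ln x) else -\<infinity>)"

definition Rbar :: "(nat \<Rightarrow> 's) pmf \<Rightarrow> nat \<Rightarrow> nat \<Rightarrow> (nat \<Rightarrow> 's) \<Rightarrow> ereal" where
  "Rbar p T k s = - (ereal (1 / real T) *
     eln (\<Prod>j\<in>{1 - int k..int T - 1}.
            win p (nat (max (j + 1) 1)) (nat (min (j + int k) (int T))) s))"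

definition Rbar_inf :: "(nat \<Rightarrow> 's) pmf \<Rightarrow> nat \<Rightarrow> (nat \<Rightarrow> 's) \<Rightarrow> ereal" where
  "Rbar_inf p T s = - (ereal (1 / real T) * eln (win p 1 T s))"

end

theory Submission
  imports Defs
begin

text \<open>
  Let P_k be the product of window probabilities inside R_k. If the window [a, t-1] contains
  the m steps preceding t, the Markov property gives
  p(s_a^t) p(s_1^(t-1)) = p(s_a^(t-1)) p(s_1^t).
  For k >= m, passing from P_k to P_(k+1) lengthens each window ending before T by one step,
  which multiplies it by the ratio p(s_1^t) / p(s_1^(t-1)); these ratios telescope and, with the
  new window s_1^1, give P_(k+1) = P_k p(s^T). When p(s^T) = 0 the ratios are undefined, but
  P_(k+1) = 0 directly: the window ending at the first time t with p(s_1^t) = 0 has probability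
  zero.
  Hence P_k = P_m p(s^T)^(k-m), and applying -ln(.)/T yields the claim.
\<close>

lemma finite_set_pmf_extensional:
  fixes p :: "('a \<Rightarrow> 's::finite) pmf"
  assumes "set_pmf p \<subseteq> extensional A" and "finite A"
  shows "finite (set_pmf p)"
proof -
  have "extensional A = PiE A (\<lambda>_. UNIV :: 's set)"
    by (simp add: PiE_def)
  moreover have "finite (PiE A (\<lambda>_. UNIV :: 's set))"
    using assms(2) by (intro finite_PiE) auto
  ultimately show ?thesis
    using assms(1) finite_subset by metis
qed

lemma win_nonneg: "0 \<le> win p a b s"
  unfolding win_def by simp

lemma win_antimono:
  assumes "{a..b} \<subseteq> {c..d}"
  shows "win p c d s \<le> win p a b s"
  unfolding win_def using assms by (intro measure_pmf.finite_measure_mono) auto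

lemma win_empty: "win p 1 0 s = 1"
  unfolding win_def by simp

lemma win_pos_set_pmf: "s \<in> set_pmf p \<Longrightarrow> 0 < win p a b s"
  unfolding win_def by (rule measure_pmf_posI) auto

lemma prob_eq_sum_fibres:
  fixes X :: "'a \<Rightarrow> 'b"
  assumes "finite (set_pmf p)"
  shows "measure_pmf.prob p {y. X y \<in> B \<and> Q y}
           = (\<Sum>h\<in>X ` set_pmf p \<inter> B. measure_pmf.prob p {y. X y = h \<and> Q y})"
proof -
  let ?H = "X ` set_pmf p \<inter> B"
  have "measure_pmf.prob p {y. X y \<in> B \<and> Q y} = measure_pmf.prob p ({y. X y \<in> B \<and> Q y} \<inter> set_pmf p)"
    by (simp add: measure_Int_set_pmf)
  also have "{y. X y \<in> B \<and> Q y} \<inter> set_pmf p = (\<Union>h\<in>?H. {y. X y = h \<and> Q y} \<inter> set_pmf p)"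
    by auto
  also have "measure_pmf.prob p \<dots> = (\<Sum>h\<in>?H. measure_pmf.prob p ({y. X y = h \<and> Q y} \<inter> set_pmf p))"
    by (rule measure_pmf.finite_measure_finite_Union) (auto simp: assms disjoint_family_on_def)
  finally show ?thesis
    by (simp add: measure_Int_set_pmf)
qed

lemma prob_eq_mult_of_fibrewise:
  fixes X :: "'a \<Rightarrow> 'b"
  assumes "finite (set_pmf p)"
    and "\<And>x. x \<in> set_pmf p \<Longrightarrow> X x \<in> B \<Longrightarrow>
           measure_pmf.prob p {y. X y = X x \<and> Q y} = c * measure_pmf.prob p {y. X y = X x}"
  shows "measure_pmf.prob p {y. X y \<in> B \<and> Q y} = c * measure_pmf.prob p {y. X y \<in> B}"
proof -
  have "measure_pmf.prob p {y. X y \<in> B \<and> Q y}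
      = (\<Sum>h\<in>X ` set_pmf p \<inter> B. c * measure_pmf.prob p {y. X y = h \<and> True})"
    using assms by (subst prob_eq_sum_fibres) (auto intro!: sum.cong)
  also have "\<dots> = c * measure_pmf.prob p {y. X y \<in> B \<and> True}"
    using assms(1) by (subst prob_eq_sum_fibres) (auto simp: sum_distrib_left)
  finally show ?thesis by simp
qed

locale finite_markov_law =
  fixes p :: "(nat \<Rightarrow> 's) pmf" and T m :: nat
  assumes finite_support: "finite (set_pmf p)"
    and markov: "markov_order p T m"
begin

lemma win_extend_eq_transition:
  assumes "1 \<le> a" "a + m \<le> t" "t \<le> T"
    and pos: "0 < win p 1 (t - 1) s"
  shows "win p a t s = win p a (t - 1) s * (win p 1 t s / win p 1 (t - 1) s)"
proof -
  define X where "X y = restrict y {1..t - 1}" for y :: "nat \<Rightarrow> 's"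
  define B where "B = {h. \<forall>i\<in>{a..t - 1}. h i = s i}"
  have X_eq: "X y = X x \<longleftrightarrow> (\<forall>i\<in>{1..t - 1}. y i = x i)" for x y
    unfolding X_def by (auto simp: fun_eq_iff restrict_def)
  have X_in_B: "X y \<in> B \<longleftrightarrow> (\<forall>i\<in>{a..t - 1}. y i = s i)" for y
    using \<open>1 \<le> a\<close> by (auto simp: X_def B_def)
  have upto_t: "{1..t} = insert t {1..t - 1}" "{a..t} = insert t {a..t - 1}"
    using assms(1,2) by auto
  have "measure_pmf.prob p {y. X y \<in> B \<and> y t = s t}
      = (win p 1 t s / win p 1 (t - 1) s) * measure_pmf.prob p {y. X y \<in> B}"
  \<comment> \<open>Condition on the history Y_1^(t-1): on every history compatible with s_a^(t-1)
      the Markov property makes the probability of the next step s_t the same.\<close>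
  proof (rule prob_eq_mult_of_fibrewise[OF finite_support])
    fix x assume x: "x \<in> set_pmf p" "X x \<in> B"
    have "t \<in> {m<..T}" using assms(1-3) by auto
    moreover have "\<forall>i\<in>{t - m..t - 1}. x i = s i" using x(2) assms(2) by (auto simp: X_in_B)
    ultimately have "win p 1 t (x(t := s t)) / win p 1 (t - 1) x = win p 1 t s / win p 1 (t - 1) s"
      using markov pos win_pos_set_pmf[OF x(1)] unfolding markov_order_def
      by (metis fun_upd_triv)
    moreover have "win p 1 t (x(t := s t)) = measure_pmf.prob p {y. X y = X x \<and> y t = s t}"
    proof -
      have "(x(t := s t)) i = x i" if "i \<in> {1..t - 1}" for i
        using that by auto
      then have "(\<forall>i\<in>insert t {1..t - 1}. y i = (x(t := s t)) i) \<longleftrightarrow> X y = X x \<and> y t = s t" for y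
        unfolding X_eq by auto
      then show ?thesis unfolding win_def upto_t by simp
    qed
    moreover have "win p 1 (t - 1) x = measure_pmf.prob p {y. X y = X x}"
      unfolding win_def X_eq ..
    ultimately show "measure_pmf.prob p {y. X y = X x \<and> y t = s t}
        = win p 1 t s / win p 1 (t - 1) s * measure_pmf.prob p {y. X y = X x}"
      using win_pos_set_pmf[OF x(1), of 1 "t - 1"] by (simp add: field_simps)
  qed
  moreover have "win p a t s = measure_pmf.prob p {y. X y \<in> B \<and> y t = s t}"
    unfolding win_def X_in_B upto_t by (rule arg_cong[where f = "measure_pmf.prob p"]) auto
  moreover have "win p a (t - 1) s = measure_pmf.prob p {y. X y \<in> B}"
    unfolding win_def X_in_B ..
  ultimately show ?thesis
    by (simp add: mult.commute)
qed

lemma win_extend_cross_mult: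
  assumes "1 \<le> a" "a = 1 \<or> a + m \<le> t" "t \<le> T"
  shows "win p a t s * win p 1 (t - 1) s = win p a (t - 1) s * win p 1 t s"
proof (cases "a = 1 \<or> win p 1 (t - 1) s = 0")
  case True
  moreover have "win p 1 t s \<le> win p 1 (t - 1) s"
    by (rule win_antimono) auto
  ultimately show ?thesis
    using win_nonneg[of p 1 t s] by auto
next
  case False
  then have "0 < win p 1 (t - 1) s"
    using win_nonneg[of p 1 "t - 1" s] by linarith
  with False assms show ?thesis
    using win_extend_eq_transition by (simp add: field_simps)
qed

end

definition window :: "(nat \<Rightarrow> 's) pmf \<Rightarrow> nat \<Rightarrow> nat \<Rightarrow> (nat \<Rightarrow> 's) \<Rightarrow> int \<Rightarrow> real" where
  "window p T k s j = win p (nat (max (j + 1) 1)) (nat (min (j + int k) (int T))) s"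

definition window_prod :: "(nat \<Rightarrow> 's) pmf \<Rightarrow> nat \<Rightarrow> nat \<Rightarrow> (nat \<Rightarrow> 's) \<Rightarrow> real" where
  "window_prod p T k s = (\<Prod>j\<in>{1 - int k..int T - 1}. window p T k s j)"

lemma Rbar_eq_window_prod: "Rbar p T k s = - (ereal (1 / real T) * eln (window_prod p T k s))"
  unfolding Rbar_def window_prod_def window_def ..

lemma prod_Suc_shift:
  fixes f :: "nat \<Rightarrow> 'a::comm_monoid_mult"
  assumes "1 \<le> n"
  shows "f 1 * (\<Prod>i\<in>{1..<n}. f (Suc i)) = (\<Prod>i\<in>{1..<n}. f i) * f n"
  using assms by (induction n) (auto simp: prod.atLeastLessThan_Suc ac_simps)

lemma prod_window_range_split:
  fixes g :: "int \<Rightarrow> 'a::comm_monoid_mult"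
  assumes "1 \<le> T"
  shows "(\<Prod>j\<in>{1 - int k..int T - 1}. g j)
       = (\<Prod>t\<in>{1..<T}. g (int t - int k)) * (\<Prod>j\<in>{int T - int k..int T - 1}. g j)"
proof -
  have inj: "inj_on (\<lambda>t. int t - int k) {1..<T}"
    by (auto intro: inj_onI)
  have image: "(\<lambda>t. int t - int k) ` {1..<T} = {1 - int k..int T - int k - 1}"
  proof (intro equalityI subsetI)
    fix j assume "j \<in> {1 - int k..int T - int k - 1}"
    then have "nat (j + int k) \<in> {1..<T}" and "j = int (nat (j + int k)) - int k"
      by auto
    then show "j \<in> (\<lambda>t. int t - int k) ` {1..<T}"
      by blast
  qed auto
  have "{1 - int k..int T - 1} = {1 - int k..int T - int k - 1} \<union> {int T - int k..int T - 1}"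
    using assms by auto
  then have "(\<Prod>j\<in>{1 - int k..int T - 1}. g j)
      = (\<Prod>j\<in>{1 - int k..int T - int k - 1}. g j) * (\<Prod>j\<in>{int T - int k..int T - 1}. g j)"
    by (simp add: prod.union_disjoint)
  also have "(\<Prod>j\<in>{1 - int k..int T - int k - 1}. g j) = (\<Prod>t\<in>{1..<T}. g (int t - int k))"
    unfolding image[symmetric] prod.reindex[OF inj] comp_def ..
  finally show ?thesis .
qed

context finite_markov_law
begin

lemma window_prod_eq_0:
  assumes "m < k" and "win p 1 T s = 0"
  shows "window_prod p T k s = 0"
proof -
  obtain t where "t < T" and prefix_pos: "win p 1 t s \<noteq> 0" and "win p 1 (Suc t) s = 0"
    using ex_least_nat_less[of "\<lambda>t. win p 1 t s = 0" T] assms(2) win_empty[of p s] by auto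
  define a where "a = nat (max (int (Suc t) - int k + 1) 1)"
  have "window p T k s (int (Suc t) - int k) = win p a (Suc t) s"
    unfolding window_def a_def using \<open>t < T\<close> by (simp add: min_def nat_add_distrib)
  also have "\<dots> = 0"
  proof -
    have "a = 1 \<or> a + m \<le> Suc t"
      unfolding a_def using \<open>m < k\<close> by auto
    then have "win p a (Suc t) s * win p 1 t s = win p a t s * win p 1 (Suc t) s"
      using win_extend_cross_mult[of a "Suc t" s] \<open>t < T\<close> unfolding a_def by auto
    then show ?thesis
      using prefix_pos \<open>win p 1 (Suc t) s = 0\<close> by simp
  qed
  finally have "window p T k s (int (Suc t) - int k) = 0" .
  moreover have "int (Suc t) - int k \<in> {1 - int k..int T - 1}"
    using \<open>t < T\<close> \<open>m < k\<close> by auto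
  ultimately show ?thesis
    unfolding window_prod_def by (meson finite_atLeastAtMost_int prod_zero)
qed

lemma window_Suc_cross_mult:
  assumes "m \<le> k" and "1 \<le> t" "t < T"
  shows "window p T (Suc k) s (int t - int k) * win p 1 t s
       = window p T k s (int t - int k) * win p 1 (Suc t) s"
proof -
  define a where "a = nat (max (int t - int k + 1) 1)"
  have "window p T (Suc k) s (int t - int k) = win p a (Suc t) s"
    and "window p T k s (int t - int k) = win p a t s"
    unfolding window_def a_def using assms(3) by (simp_all add: min_def nat_add_distrib)
  moreover have "a = 1 \<or> a + m \<le> Suc t"
    unfolding a_def using assms(1) by auto
  ultimately show ?thesis
    using win_extend_cross_mult[of a "Suc t" s] assms(3) unfolding a_def by auto
qed

lemma window_prod_Suc_mult_eq:
  assumes "m \<le> k" and "1 \<le> T"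
  shows "window_prod p T (Suc k) s * (\<Prod>t\<in>{1..<T}. win p 1 t s)
       = window_prod p T k s * win p 1 T s * (\<Prod>t\<in>{1..<T}. win p 1 t s)"
proof -
  let ?J = "{int T - int k..int T - 1}"
  have "window_prod p T (Suc k) s = win p 1 1 s * (\<Prod>j\<in>{1 - int k..int T - 1}. window p T (Suc k) s j)"
  proof -
    have "{1 - int (Suc k)..int T - 1} = insert (- int k) {1 - int k..int T - 1}"
      using assms(2) by auto
    moreover have "window p T (Suc k) s (- int k) = win p 1 1 s"
      unfolding window_def using assms(2) by (simp add: max_def min_def)
    ultimately show ?thesis
      unfolding window_prod_def by simp
  qed
  also have "(\<Prod>j\<in>?J. window p T (Suc k) s j) = (\<Prod>j\<in>?J. window p T k s j)"
  proof (rule prod.cong[OF refl])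
    fix j assume "j \<in> ?J"
    then have "min (j + int (Suc k)) (int T) = int T" "min (j + int k) (int T) = int T"
      by auto
    then show "window p T (Suc k) s j = window p T k s j"
      unfolding window_def by simp
  qed
  ultimately have split_Suc: "window_prod p T (Suc k) s = win p 1 1 s
      * (\<Prod>t\<in>{1..<T}. window p T (Suc k) s (int t - int k)) * (\<Prod>j\<in>?J. window p T k s j)"
    unfolding prod_window_range_split[OF assms(2)] by (simp only: ac_simps)
  have markov_steps: "(\<Prod>t\<in>{1..<T}. window p T (Suc k) s (int t - int k)) * (\<Prod>t\<in>{1..<T}. win p 1 t s)
      = (\<Prod>t\<in>{1..<T}. window p T k s (int t - int k)) * (\<Prod>t\<in>{1..<T}. win p 1 (Suc t) s)"
    unfolding prod.distrib[symmetric] using window_Suc_cross_mult[OF assms(1)] by (intro prod.cong) auto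
  have "window_prod p T (Suc k) s * (\<Prod>t\<in>{1..<T}. win p 1 t s)
      = win p 1 1 s * (\<Prod>j\<in>?J. window p T k s j) * ((\<Prod>t\<in>{1..<T}. window p T (Suc k) s (int t - int k))
        * (\<Prod>t\<in>{1..<T}. win p 1 t s))"
    unfolding split_Suc by (simp only: ac_simps)
  also have "\<dots> = window_prod p T k s * (win p 1 1 s * (\<Prod>t\<in>{1..<T}. win p 1 (Suc t) s))"
    unfolding markov_steps window_prod_def prod_window_range_split[OF assms(2)] by (simp only: ac_simps)
  also have "\<dots> = window_prod p T k s * ((\<Prod>t\<in>{1..<T}. win p 1 t s) * win p 1 T s)"
    using prod_Suc_shift[OF assms(2), of "\<lambda>t. win p 1 t s"] by simp
  finally show ?thesis
    by (simp only: ac_simps)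
qed

lemma window_prod_Suc:
  assumes "m \<le> k" and "1 \<le> T"
  shows "window_prod p T (Suc k) s = window_prod p T k s * win p 1 T s"
proof (cases "win p 1 T s = 0")
  case True
  then show ?thesis
    using window_prod_eq_0[of "Suc k"] assms(1) by simp
next
  case False
  then have "0 < win p 1 T s"
    using win_nonneg[of p 1 T s] by linarith
  moreover have "win p 1 T s \<le> win p 1 t s" if "t < T" for t
    using that by (intro win_antimono) auto
  ultimately have "(\<Prod>t\<in>{1..<T}. win p 1 t s) \<noteq> 0"
    by (metis less_le_trans less_irrefl prod_pos atLeastLessThan_iff)
  then show ?thesis
    using window_prod_Suc_mult_eq[OF assms, of s] by (metis mult_right_cancel)
qed

lemma window_prod_add:
  assumes "1 \<le> T"
  shows "window_prod p T (m + d) s = window_prod p T m s * win p 1 T s ^ d"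
proof (induction d)
  case (Suc d)
  then show ?case
    using window_prod_Suc[of "m + d", OF _ assms] by simp
qed simp

end

lemma eln_neq_PInf: "eln x \<noteq> \<infinity>"
  by (simp add: eln_def)

lemma eln_mult_power:
  assumes "0 \<le> x" and "0 \<le> y"
  shows "eln (x * y ^ d) = eln x + ereal (real d) * eln y"
proof (cases "x = 0 \<or> (y = 0 \<and> 0 < d)")
  case True
  have "eln x = -\<infinity> \<or> ereal (real d) * eln y = -\<infinity>"
    using True by (auto simp: eln_def)
  moreover have "ereal (real d) * eln y \<noteq> \<infinity>"
    by (simp add: eln_def)
  ultimately have rhs: "eln x + ereal (real d) * eln y = -\<infinity>"
    using eln_neq_PInf[of x] by auto
  have "x * y ^ d = 0"
    using True by (auto simp: power_0_left)
  then show ?thesis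
    unfolding rhs by (simp only:) (simp add: eln_def)
next
  case False
  then have "0 < x" and "d = 0 \<or> 0 < y"
    using assms by auto
  then show ?thesis
    by (auto simp: eln_def ln_mult ln_realpow)
qed

lemma ereal_uminus_scale_add:
  fixes a b :: ereal
  assumes "a \<noteq> \<infinity>" and "b \<noteq> \<infinity>" and "0 \<le> d"
  shows "- (ereal c * (a + ereal d * b)) = - (ereal c * a) + ereal d * - (ereal c * b)"
  using assms by (cases a; cases b) (auto simp: algebra_simps)

theorem proposition7:
  fixes p :: "(nat \<Rightarrow> 's::finite) pmf" and T m k :: nat and s :: "nat \<Rightarrow> 's"
  assumes "T \<ge> 1" and "1 \<le> m" and "m \<le> T"
    and "set_pmf p \<subseteq> extensional {1..T}"
    and "markov_order p T m"
    and "k \<ge> m"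
  shows "Rbar p T k s = Rbar p T m s + ereal (real (k - m)) * Rbar_inf p T s"
proof -
  interpret finite_markov_law p T m
    using assms(4,5) finite_set_pmf_extensional by unfold_locales auto
  define c where "c = ereal (1 / real T)"
  define d where "d = k - m"
  have "window_prod p T k s = window_prod p T m s * win p 1 T s ^ d"
    using window_prod_add[OF assms(1), of d] assms(6) by (simp add: d_def)
  then have "Rbar p T k s = - (c * (eln (window_prod p T m s) + ereal (real d) * eln (win p 1 T s)))"
    unfolding Rbar_eq_window_prod c_def
    by (simp add: eln_mult_power window_prod_def prod_nonneg window_def win_nonneg)
  also have "\<dots> = - (c * eln (window_prod p T m s)) + ereal (real d) * - (c * eln (win p 1 T s))"
    unfolding c_def by (intro ereal_uminus_scale_add eln_neq_PInf) simp
  finally show ?thesis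
    unfolding Rbar_eq_window_prod Rbar_inf_def c_def d_def .
qed

end
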